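(* Let $x<y$ be real numbers. For every convex function $f:[x,y]\to\mathbb{R}$ the following inequalities are satisfied: $$\frac{3}{(y-x)^2}\int_x^y\int_x^y f\left(\frac{s+t}{2}\right)ds\,dt\leq\frac{2}{y-x}\int_x^y f(t)\,dt+f\left(\frac{x+y}{2}\right)$$ and $$\frac{4}{y-x}\int_x^y f(t)\,dt\leq\frac{3}{(y-x)^2}\int_x^y\int_x^y f\left(\frac{s+t}{2}\right)ds\,dt+\frac{f(x)+f(y)}{2}.$$ *)

theory Defs
  imports "HOL-Analysis.Analysis"
begin

end

theory Submission
  imports Defs
begin

text \<open>
  Substituting \<open>u = (s + t) / 2\<close> in the inner integral and integrating by parts turns the
  double integral into a single integral of \<open>f\<close> against a tent-shaped weight: with \<open>m\<close> the
  midpoint, it equals \<open>4 \<integral>\<^sub>x\<^sup>m (u - x) f(u) du + 4 \<integral>\<^sub>m\<^sup>y (y - u) f(u) du\<close>. Both inequalities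
  therefore reduce to upper and lower bounds, on each half of the interval, for the first
  moments of a convex function about the endpoints. Such a bound is obtained by integrating
  \<open>f\<close> against an affine weight that changes sign once: on either side of the sign change
  \<open>f\<close> lies on a fixed side of the chord through the sign change and an endpoint, and the
  weight is chosen orthogonal to affine functions vanishing at that endpoint, so the chord
  contributes only its endpoint value.
\<close>

lemma convex_on_Icc_bounded:
  fixes f :: "real \<Rightarrow> real"
  assumes "convex_on {a..b} f"
  shows "bounded (f ` {a..b})"
proof -
  define M where "M = max (f a) (f b)"
  have "\<bar>f u\<bar> \<le> \<bar>M\<bar> + 2 * \<bar>f ((a + b) / 2)\<bar>" if u: "u \<in> {a..b}" for u
  proof -
    have "f u \<le> M" "f (a + b - u) \<le> M"
      using convex_on_le_max[OF assms] u unfolding M_def by auto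
    moreover have "f ((1 - 1/2) *\<^sub>R u + (1/2) *\<^sub>R (a + b - u))
                     \<le> (1 - 1/2) * f u + (1/2) * f (a + b - u)"
      using u by (intro convex_onD[OF assms]) auto
    then have "2 * f ((a + b) / 2) \<le> f u + f (a + b - u)"
      by (simp add: field_simps)
    ultimately show ?thesis by linarith
  qed
  then show ?thesis
    unfolding bounded_real by blast
qed

lemma bounded_continuous_interior_mult_integrable:
  fixes f g :: "real \<Rightarrow> real"
  assumes f: "continuous_on {a<..<b} f" "bounded (f ` {a..b})" and g: "continuous_on {a..b} g"
  shows "(\<lambda>u. g u * f u) integrable_on {a..b}"
proof -
  obtain B where B: "\<And>u. u \<in> {a..b} \<Longrightarrow> \<bar>f u\<bar> \<le> B"
    using f(2) unfolding bounded_real by blast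
  obtain C where C: "\<And>u. u \<in> {a..b} \<Longrightarrow> \<bar>g u\<bar> \<le> C"
    using compact_continuous_image[OF g compact_Icc] unfolding bounded_real[symmetric]
    by (metis compact_imp_bounded bounded_real image_eqI)
  have "(\<lambda>u. g u * f u) integrable_on {a<..<b}"
  proof (rule measurable_bounded_by_integrable_imp_integrable_real)
    show "(\<lambda>u. g u * f u) \<in> borel_measurable (lebesgue_on {a<..<b})"
      by (intro continuous_imp_measurable_on_sets_lebesgue continuous_intros f
          continuous_on_subset[OF g]) auto
    show "\<bar>g u * f u\<bar> \<le> C * B" if "u \<in> {a<..<b}" for u
      unfolding abs_mult using that B C by (intro mult_mono) force+
  qed (auto intro: integrable_on_const)
  then show ?thesis
    by (rule integrable_spike_set) (auto intro: negligible_subset[of "{a, b}"])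
qed

lemma convex_on_Icc_mult_integrable:
  fixes f g :: "real \<Rightarrow> real"
  assumes "convex_on {a..b} f" "continuous_on {a..b} g"
  shows "(\<lambda>u. g u * f u) integrable_on {a..b}"
proof (rule bounded_continuous_interior_mult_integrable)
  show "continuous_on {a<..<b} f"
    by (rule convex_on_continuous[OF open_greaterThanLessThan convex_on_subset[OF assms(1)]]) auto
qed (use assms convex_on_Icc_bounded in auto)

lemma convex_on_integral_split:
  fixes f :: "real \<Rightarrow> real"
  assumes "convex_on {x..y} f" "m \<in> {x..y}"
  shows "integral {x..y} f = integral {x..m} f + integral {m..y} f"
  using assms
  by (intro Henstock_Kurzweil_Integration.integral_combine[symmetric] integrable_on_subinterval[OF
        convex_on_Icc_mult_integrable[OF assms(1), of "\<lambda>_. 1", simplified]]) auto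

lemma has_integral_midpoint_substitution:
  fixes g :: "real \<Rightarrow> real"
  assumes "(g has_integral I) {(a + c) / 2..(b + c) / 2}"
  shows "((\<lambda>s. g ((s + c) / 2)) has_integral 2 * I) {a..b}"
proof -
  have "((\<lambda>s. g ((1/2) *\<^sub>R s + c/2)) has_integral I /\<^sub>R (1/2) ^ DIM(real))
          (cbox (((a + c) / 2 - c/2) /\<^sub>R (1/2)) (((b + c) / 2 - c/2) /\<^sub>R (1/2)))"
    using assms by (intro has_integral_affinity') (auto simp: cbox_interval)
  then show ?thesis
    by (simp add: cbox_interval add_divide_distrib mult.commute)
qed

lemma integral_indefinite_integral:
  fixes f :: "real \<Rightarrow> real"
  assumes "a \<le> b" and f: "f integrable_on {a..b}" "continuous_on {a<..<b} f"
    and "(\<lambda>u. (b - u) * f u) integrable_on {a..b}"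
  shows "integral {a..b} (\<lambda>z. integral {a..z} f) = integral {a..b} (\<lambda>u. (b - u) * f u)"
proof -
  define P where "P = (\<lambda>z. integral {a..z} f)"
  have "((\<lambda>z. 1 * P z) has_integral integral {a..b} (\<lambda>u. (b - u) * f u)) {a..b}"
  proof (rule integration_by_parts_interior[OF bounded_bilinear_mult \<open>a \<le> b\<close>])
    show "continuous_on {a..b} (\<lambda>z. z - b)" "continuous_on {a..b} P"
      unfolding P_def by (intro continuous_intros indefinite_integral_continuous_1 f)+
    show "((\<lambda>z. z - b) has_vector_derivative 1) (at z)" for z
      by (auto intro!: derivative_eq_intros)
    show "(P has_vector_derivative f z) (at z)" if z: "z \<in> {a<..<b}" for z
    proof -
      have "continuous (at z within {a..b} - {}) f"
        using f(2) z by (simp add: continuous_on_eq_continuous_at continuous_at_imp_continuous_within)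
      from integral_has_vector_derivative_continuous_at[OF f(1) _ _ this]
      show ?thesis
        using z by (simp add: P_def at_within_Icc_at)
    qed
    show "((\<lambda>u. (u - b) * f u) has_integral
            (b - b) * P b - (a - b) * P a - integral {a..b} (\<lambda>u. (b - u) * f u)) {a..b}"
      using has_integral_neg[OF integrable_integral[OF assms(4)]]
      by (simp add: P_def algebra_simps)
  qed
  then show ?thesis
    by (simp add: P_def integral_unique)
qed

lemma integral_midpoint_eq_indefinite:
  fixes f :: "real \<Rightarrow> real"
  assumes f: "f integrable_on {x..y}" and t: "t \<in> {x..y}"
  shows "integral {x..y} (\<lambda>s. f ((s + t) / 2))
           = 2 * (integral {x..(y + t) / 2} f - integral {x..(x + t) / 2} f)"
proof -
  have f_int: "f integrable_on {a..b}" if "x \<le> a" "b \<le> y" for a b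
    using integrable_on_subinterval[OF f] that by auto
  have "integral {x..y} (\<lambda>s. f ((s + t) / 2)) = 2 * integral {(x + t) / 2..(y + t) / 2} f"
    using t by (intro integral_unique has_integral_midpoint_substitution integrable_integral f_int) auto
  moreover have "integral {x..(x + t) / 2} f + integral {(x + t) / 2..(y + t) / 2} f
                   = integral {x..(y + t) / 2} f"
    using t by (intro Henstock_Kurzweil_Integration.integral_combine f_int) auto
  ultimately show ?thesis
    by simp
qed

lemma integral_integral_midpoint_indefinite:
  fixes f :: "real \<Rightarrow> real"
  assumes "x \<le> y" and f: "f integrable_on {x..y}"
  defines "P \<equiv> \<lambda>z. integral {x..z} f"
  shows "integral {x..y} (\<lambda>t. integral {x..y} (\<lambda>s. f ((s + t) / 2)))
           = 4 * (integral {(x + y) / 2..y} P - integral {x..(x + y) / 2} P)"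
proof -
  have P_int: "(P has_integral integral {a..b} P) {a..b}" if "x \<le> a" "b \<le> y" for a b
    using that unfolding P_def
    by (intro integrable_integral integrable_continuous_interval
        continuous_on_subset[OF indefinite_integral_continuous_1[OF f]]) auto
  have "(P has_integral integral {(x + y) / 2..y} P) {(x + y) / 2..(y + y) / 2}"
    using P_int[of "(x + y) / 2" y] \<open>x \<le> y\<close> by simp
  from has_integral_midpoint_substitution[OF this]
  have "((\<lambda>t. P ((t + y) / 2)) has_integral 2 * integral {(x + y) / 2..y} P) {x..y}" .
  moreover have "(P has_integral integral {x..(x + y) / 2} P) {(x + x) / 2..(y + x) / 2}"
    using P_int[of x "(x + y) / 2"] \<open>x \<le> y\<close> by (simp add: add.commute)
  from has_integral_midpoint_substitution[OF this]
  have "((\<lambda>t. P ((t + x) / 2)) has_integral 2 * integral {x..(x + y) / 2} P) {x..y}" .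
  ultimately have "((\<lambda>t. 2 * (P ((t + y) / 2) - P ((t + x) / 2))) has_integral
          2 * (2 * integral {(x + y) / 2..y} P - 2 * integral {x..(x + y) / 2} P)) {x..y}"
    by (intro has_integral_mult_right has_integral_diff)
  moreover have "integral {x..y} (\<lambda>s. f ((s + t) / 2)) = 2 * (P ((t + y) / 2) - P ((t + x) / 2))"
    if "t \<in> {x..y}" for t
    using integral_midpoint_eq_indefinite[OF f that] by (simp add: P_def add.commute)
  ultimately have "integral {x..y} (\<lambda>t. integral {x..y} (\<lambda>s. f ((s + t) / 2)))
                    = 2 * (2 * integral {(x + y) / 2..y} P - 2 * integral {x..(x + y) / 2} P)"
    by (metis (no_types, lifting) integral_cong integral_unique)
  then show ?thesis
    by simp
qed

lemma integral_integral_midpoint: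
  fixes f :: "real \<Rightarrow> real"
  assumes "x \<le> y" "continuous_on {x<..<y} f" "bounded (f ` {x..y})"
  defines "m \<equiv> (x + y) / 2"
  shows "integral {x..y} (\<lambda>t. integral {x..y} (\<lambda>s. f ((s + t) / 2)))
           = 4 * (integral {x..m} (\<lambda>u. (u - x) * f u) + integral {m..y} (\<lambda>u. (y - u) * f u))"
proof -
  have m: "x \<le> m" "m \<le> y"
    using assms(1) by (auto simp: m_def)
  have int: "(\<lambda>u. g u * f u) integrable_on {a..b}"
    if "x \<le> a" "b \<le> y" "continuous_on {a..b} g" for a b g
    using that assms(2,3)
    by (intro bounded_continuous_interior_mult_integrable)
      (auto intro: continuous_on_subset bounded_subset[OF assms(3)])
  have f_int: "f integrable_on {a..b}" if "x \<le> a" "b \<le> y" for a b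
    using int[OF that, of "\<lambda>_. 1"] by simp
  have f_cont: "continuous_on {a<..<b} f" if "x \<le> a" "b \<le> y" for a b
    using that by (intro continuous_on_subset[OF assms(2)]) auto
  define I where "I = integral {x..m} f"
  have left: "integral {x..m} (\<lambda>z. integral {x..z} f) = integral {x..m} (\<lambda>u. (m - u) * f u)"
    using m by (intro integral_indefinite_integral f_int f_cont int continuous_intros) auto
  have "integral {m..y} (\<lambda>z. integral {x..z} f) = integral {m..y} (\<lambda>z. I + integral {m..z} f)"
    unfolding I_def using m
    by (intro integral_cong Henstock_Kurzweil_Integration.integral_combine[symmetric] f_int) auto
  also have "\<dots> = (y - m) * I + integral {m..y} (\<lambda>z. integral {m..z} f)"
  proof -
    have "(\<lambda>z. integral {m..z} f) integrable_on {m..y}"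
      using m by (intro integrable_continuous_interval indefinite_integral_continuous_1 f_int) auto
    then show ?thesis
      by (subst Henstock_Kurzweil_Integration.integral_add) (use m in auto)
  qed
  also have "integral {m..y} (\<lambda>z. integral {m..z} f) = integral {m..y} (\<lambda>u. (y - u) * f u)"
    using m by (intro integral_indefinite_integral f_int f_cont int continuous_intros) auto
  finally have right: "integral {m..y} (\<lambda>z. integral {x..z} f)
                         = (y - m) * I + integral {m..y} (\<lambda>u. (y - u) * f u)" .
  have "integral {x..m} (\<lambda>u. (u - x) * f u) = integral {x..m} (\<lambda>u. (y - m) * f u - (m - u) * f u)"
    by (intro integral_cong) (simp add: m_def algebra_simps)
  also have "\<dots> = (y - m) * I - integral {x..m} (\<lambda>u. (m - u) * f u)"
    unfolding I_def using m
    by (subst Henstock_Kurzweil_Integration.integral_diff)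
      (auto intro!: int continuous_on_mult_const continuous_on_diff continuous_on_const continuous_on_id)
  finally have "integral {x..m} (\<lambda>u. (u - x) * f u)
                  = (y - m) * I - integral {x..m} (\<lambda>u. (m - u) * f u)" .
  with left right
    integral_integral_midpoint_indefinite[OF assms(1) f_int[OF order_refl order_refl], folded m_def]
  show ?thesis
    by simp
qed

lemma convex_on_integral_integral_midpoint:
  fixes f :: "real \<Rightarrow> real"
  assumes "x \<le> y" "convex_on {x..y} f"
  defines "m \<equiv> (x + y) / 2"
  shows "integral {x..y} (\<lambda>t. integral {x..y} (\<lambda>s. f ((s + t) / 2)))
           = 4 * (integral {x..m} (\<lambda>u. (u - x) * f u) + integral {m..y} (\<lambda>u. (y - u) * f u))"
  unfolding m_def
proof (rule integral_integral_midpoint)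
  show "continuous_on {x<..<y} f"
    by (rule convex_on_continuous[OF open_greaterThanLessThan convex_on_subset[OF assms(2)]]) auto
qed (use assms convex_on_Icc_bounded in auto)

lemma has_integral_quadratic:
  fixes g :: "real \<Rightarrow> real"
  assumes "a \<le> b" "\<And>u. g u = \<alpha> + \<beta> * (u - a) + \<gamma> * (u - a)^2"
    "I = \<alpha> * (b - a) + \<beta> * (b - a)^2 / 2 + \<gamma> * (b - a)^3 / 3"
  shows "(g has_integral I) {a..b}"
proof -
  define G where "G u = \<alpha> * (u - a) + \<beta> * (u - a)^2 / 2 + \<gamma> * (u - a)^3 / 3" for u
  have "(g has_integral G b - G a) {a..b}"
  proof (rule fundamental_theorem_of_calculus[OF \<open>a \<le> b\<close>])
    fix u
    have "(G has_real_derivative g u) (at u)"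
      unfolding G_def assms(2) by (rule derivative_eq_intros refl | simp add: power2_eq_square)+
    then show "(G has_vector_derivative g u) (at u within {a..b})"
      by (simp add: has_real_derivative_iff_has_vector_derivative has_vector_derivative_at_within)
  qed
  then show ?thesis
    by (simp add: G_def assms(3))
qed

lemma convex_on_mult_le_chord:
  fixes f :: "real \<Rightarrow> real"
  assumes f: "convex_on {a..b} f" and pq: "a \<le> p" "p < q" "q \<le> b" and u: "u \<in> {a..b}"
    and w: "u \<in> {p..q} \<Longrightarrow> 0 \<le> w" "u \<notin> {p..q} \<Longrightarrow> w \<le> 0"
  shows "w * f u \<le> w * (f p + (f q - f p) / (q - p) * (u - p))"
proof (cases "u \<in> {p..q}")
  case True
  have "convex_on {p..q} f"
    using pq by (intro convex_on_subset[OF f]) auto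
  from convex_onD_Icc'[OF this True] show ?thesis
    using w(1)[OF True] by (intro mult_left_mono) auto
next
  case False
  have "f p + (f q - f p) / (q - p) * (u - p) \<le> f u"
  proof (cases "u < p")
    case True
    have "convex_on {u..q} f"
      using pq u by (intro convex_on_subset[OF f]) auto
    from convex_onD_Icc'[OF this, of p] True pq
    have "(q - u) * f p \<le> (p - u) * f q + (q - p) * f u"
      by (simp add: field_simps)
    with True pq show ?thesis
      by (simp add: field_simps)
  next
    case False
    with \<open>u \<notin> {p..q}\<close> have "q < u" by auto
    have "convex_on {p..u} f"
      using pq u by (intro convex_on_subset[OF f]) auto
    from convex_onD_Icc'[OF this, of q] \<open>q < u\<close> pq
    have "(u - p) * f q \<le> (u - q) * f p + (q - p) * f u"
      by (simp add: field_simps)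
    with \<open>q < u\<close> pq show ?thesis
      by (simp add: field_simps)
  qed
  then show ?thesis
    using w(2)[OF False] by (rule mult_left_mono_neg)
qed

lemma convex_on_moment_bound_right:
  fixes f :: "real \<Rightarrow> real"
  assumes "a < b" "convex_on {a..b} f"
  shows "3 * integral {a..b} (\<lambda>u. (u - a) * f u) - (b - a) * integral {a..b} f
           \<le> (b - a)^2 / 2 * f b"
proof -
  \<comment> \<open>The weight \<open>3 (u - a) - h\<close> vanishes at \<open>z\<close>, has integral \<open>h\<^sup>2 / 2\<close>
    and is orthogonal to \<open>u - b\<close>.\<close>
  define h where "h = b - a"
  define z where "z = a + h / 3"
  define K where "K = (f b - f z) / (b - z)"
  have h: "h > 0" "b = a + h"
    using assms(1) by (auto simp: h_def)
  have "((\<lambda>u. 3 * ((u - a) * f u) - h * (1 * f u)) has_integral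
          3 * integral {a..b} (\<lambda>u. (u - a) * f u) - h * integral {a..b} (\<lambda>u. 1 * f u)) {a..b}"
    by (intro has_integral_diff has_integral_mult_right integrable_integral
        convex_on_Icc_mult_integrable assms(2) continuous_intros)
  then have lhs: "((\<lambda>u. (3 * (u - a) - h) * f u) has_integral
          3 * integral {a..b} (\<lambda>u. (u - a) * f u) - h * integral {a..b} f) {a..b}"
    by (simp add: algebra_simps)
  have rhs: "((\<lambda>u. (3 * (u - a) - h) * (f z + K * (u - z))) has_integral h^2 / 2 * f b) {a..b}"
    by (rule has_integral_quadratic[where \<alpha>="- h * (f z - K * h / 3)"
          and \<beta>="3 * (f z - K * h / 3) - h * K" and \<gamma>="3 * K"])
      (use h in \<open>auto simp: z_def K_def field_simps power2_eq_square power3_eq_cube\<close>)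
  have "(3 * (u - a) - h) * f u \<le> (3 * (u - a) - h) * (f z + K * (u - z))" if "u \<in> {a..b}" for u
    unfolding K_def by (rule convex_on_mult_le_chord[OF assms(2)]) (use that h in \<open>auto simp: z_def\<close>)
  from has_integral_le[OF lhs rhs this] show ?thesis
    by (simp add: h_def)
qed

lemma convex_on_moment_bound_left:
  fixes f :: "real \<Rightarrow> real"
  assumes "a < b" "convex_on {a..b} f"
  shows "3 * integral {a..b} (\<lambda>u. (b - u) * f u) - (b - a) * integral {a..b} f
           \<le> (b - a)^2 / 2 * f a"
proof -
  \<comment> \<open>The weight \<open>3 (b - u) - h\<close> vanishes at \<open>z\<close>, has integral \<open>h\<^sup>2 / 2\<close>
    and is orthogonal to \<open>u - a\<close>.\<close>
  define h where "h = b - a"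
  define z where "z = a + 2 * h / 3"
  define K where "K = (f z - f a) / (z - a)"
  have h: "h > 0" "b = a + h"
    using assms(1) by (auto simp: h_def)
  have "((\<lambda>u. 3 * ((b - u) * f u) - h * (1 * f u)) has_integral
          3 * integral {a..b} (\<lambda>u. (b - u) * f u) - h * integral {a..b} (\<lambda>u. 1 * f u)) {a..b}"
    by (intro has_integral_diff has_integral_mult_right integrable_integral
        convex_on_Icc_mult_integrable assms(2) continuous_intros)
  then have lhs: "((\<lambda>u. (3 * (b - u) - h) * f u) has_integral
          3 * integral {a..b} (\<lambda>u. (b - u) * f u) - h * integral {a..b} f) {a..b}"
    by (simp add: algebra_simps)
  have rhs: "((\<lambda>u. (3 * (b - u) - h) * (f a + K * (u - a))) has_integral h^2 / 2 * f a) {a..b}"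
    by (rule has_integral_quadratic[where \<alpha>="2 * h * f a"
          and \<beta>="2 * h * K - 3 * f a" and \<gamma>="- 3 * K"])
      (use h in \<open>auto simp: field_simps power2_eq_square power3_eq_cube\<close>)
  have "(3 * (b - u) - h) * f u \<le> (3 * (b - u) - h) * (f a + K * (u - a))" if "u \<in> {a..b}" for u
    unfolding K_def by (rule convex_on_mult_le_chord[OF assms(2)]) (use that h in \<open>auto simp: z_def\<close>)
  from has_integral_le[OF lhs rhs this] show ?thesis
    by (simp add: h_def)
qed

lemma integral_moments_add:
  fixes f :: "real \<Rightarrow> real"
  assumes "(\<lambda>u. (u - a) * f u) integrable_on {a..b}" "(\<lambda>u. (b - u) * f u) integrable_on {a..b}"
  shows "integral {a..b} (\<lambda>u. (u - a) * f u) + integral {a..b} (\<lambda>u. (b - u) * f u)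
           = (b - a) * integral {a..b} f"
proof -
  have "integral {a..b} (\<lambda>u. (u - a) * f u) + integral {a..b} (\<lambda>u. (b - u) * f u)
          = integral {a..b} (\<lambda>u. (b - a) * f u)"
    using assms by (simp add: Henstock_Kurzweil_Integration.integral_add[symmetric] algebra_simps)
  then show ?thesis
    by simp
qed

lemma convex_on_double_integral_midpoint_upper:
  fixes f :: "real \<Rightarrow> real"
  assumes "x < y" "convex_on {x..y} f"
  shows "3 * integral {x..y} (\<lambda>t. integral {x..y} (\<lambda>s. f ((s + t) / 2)))
           \<le> 2 * (y - x) * integral {x..y} f + (y - x)^2 * f ((x + y) / 2)"
proof -
  define m where "m = (x + y) / 2"
  define c where "c = m - x"
  define L where "L = integral {x..m} (\<lambda>u. (u - x) * f u)"
  define R where "R = integral {m..y} (\<lambda>u. (y - u) * f u)"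
  have m: "x < m" "m < y" and c: "y - m = c" "y - x = 2 * c"
    using assms(1) by (auto simp: m_def c_def field_simps)
  have D: "integral {x..y} (\<lambda>t. integral {x..y} (\<lambda>s. f ((s + t) / 2))) = 4 * (L + R)"
    unfolding L_def R_def m_def using assms by (intro convex_on_integral_integral_midpoint) auto
  have I: "integral {x..y} f = integral {x..m} f + integral {m..y} f"
    using m by (intro convex_on_integral_split assms) auto
  have cvx: "convex_on {a..b} f" if "x \<le> a" "b \<le> y" for a b
    using that by (intro convex_on_subset[OF assms(2)]) auto
  have "3 * L - c * integral {x..m} f \<le> c^2 / 2 * f m"
    unfolding L_def c_def using m by (intro convex_on_moment_bound_right cvx) auto
  moreover have "3 * R - c * integral {m..y} f \<le> c^2 / 2 * f m"
    unfolding R_def c(1)[symmetric] using m by (intro convex_on_moment_bound_left cvx) auto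
  ultimately show ?thesis
    unfolding D I c(2) m_def[symmetric] by (simp add: algebra_simps power2_eq_square)
qed

lemma convex_on_double_integral_midpoint_lower:
  fixes f :: "real \<Rightarrow> real"
  assumes "x < y" "convex_on {x..y} f"
  shows "4 * (y - x) * integral {x..y} f
           \<le> 3 * integral {x..y} (\<lambda>t. integral {x..y} (\<lambda>s. f ((s + t) / 2)))
              + (y - x)^2 * (f x + f y) / 2"
proof -
  define m where "m = (x + y) / 2"
  define c where "c = m - x"
  define I\<^sub>1 where "I\<^sub>1 = integral {x..m} f"
  define I\<^sub>2 where "I\<^sub>2 = integral {m..y} f"
  define L where "L = integral {x..m} (\<lambda>u. (u - x) * f u)"
  define R where "R = integral {m..y} (\<lambda>u. (y - u) * f u)"
  have m: "x < m" "m < y" and c: "y - m = c" "y - x = 2 * c"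
    using assms(1) by (auto simp: m_def c_def field_simps)
  have cvx: "convex_on {a..b} f" if "x \<le> a" "b \<le> y" for a b
    using that by (intro convex_on_subset[OF assms(2)]) auto
  have D: "integral {x..y} (\<lambda>t. integral {x..y} (\<lambda>s. f ((s + t) / 2))) = 4 * (L + R)"
    unfolding L_def R_def m_def using assms by (intro convex_on_integral_integral_midpoint) auto
  have I: "integral {x..y} f = I\<^sub>1 + I\<^sub>2"
    unfolding I\<^sub>1_def I\<^sub>2_def using m by (intro convex_on_integral_split assms) auto
  have "2 * c * I\<^sub>1 - 3 * L \<le> c^2 / 2 * f x"
  proof -
    have "3 * integral {x..m} (\<lambda>u. (m - u) * f u) - c * I\<^sub>1 \<le> c^2 / 2 * f x"
      unfolding c_def I\<^sub>1_def using m by (intro convex_on_moment_bound_left cvx) auto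
    moreover have "L + integral {x..m} (\<lambda>u. (m - u) * f u) = c * I\<^sub>1"
      unfolding L_def c_def I\<^sub>1_def using m
      by (intro integral_moments_add convex_on_Icc_mult_integrable cvx continuous_intros) auto
    ultimately show ?thesis
      by linarith
  qed
  moreover have "2 * c * I\<^sub>2 - 3 * R \<le> c^2 / 2 * f y"
  proof -
    have "3 * integral {m..y} (\<lambda>u. (u - m) * f u) - c * I\<^sub>2 \<le> c^2 / 2 * f y"
      unfolding c(1)[symmetric] I\<^sub>2_def using m by (intro convex_on_moment_bound_right cvx) auto
    moreover have "integral {m..y} (\<lambda>u. (u - m) * f u) + R = c * I\<^sub>2"
      unfolding R_def c(1)[symmetric] I\<^sub>2_def using m
      by (intro integral_moments_add convex_on_Icc_mult_integrable cvx continuous_intros) auto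
    ultimately show ?thesis
      by linarith
  qed
  ultimately have "(2 * c * I\<^sub>1 - 3 * L) + (2 * c * I\<^sub>2 - 3 * R)
                    \<le> c^2 / 2 * f x + c^2 / 2 * f y"
    by (rule add_mono)
  then have "4 * (2 * c) * (I\<^sub>1 + I\<^sub>2) - 3 * (4 * (L + R)) \<le> (2 * c)^2 * (f x + f y) / 2"
    by (simp add: algebra_simps power2_eq_square)
  then show ?thesis
    unfolding D I c(2) by linarith
qed

theorem corollary1:
  fixes f :: "real \<Rightarrow> real" and x y :: real
  assumes "x < y"
    and "convex_on {x..y} f"
  shows "(3 / (y - x)^2 * integral {x..y} (\<lambda>t. integral {x..y} (\<lambda>s. f ((s + t) / 2)))
           \<le> 2 / (y - x) * integral {x..y} f + f ((x + y) / 2))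
    \<and> (4 / (y - x) * integral {x..y} f
           \<le> 3 / (y - x)^2 * integral {x..y} (\<lambda>t. integral {x..y} (\<lambda>s. f ((s + t) / 2)))
              + (f x + f y) / 2)"
proof -
  define h where "h = y - x"
  have "h > 0"
    using assms(1) by (simp add: h_def)
  with convex_on_double_integral_midpoint_upper[OF assms]
    convex_on_double_integral_midpoint_lower[OF assms]
  show ?thesis
    unfolding h_def[symmetric] by (simp add: field_simps power2_eq_square)
qed

end
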